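(* Let $\{(A_k,f_k)\}_{k=0}^n$ be a chain of one-dimensional double extensions by $\{(b_{k+1},d_k)\}_{k=0}^{n-1}$ satisfying (NNP) and (2SP). Then $n\geq 3$ and: (a) $(A_n,f_n)$ is a $2n$-dimensional $2$-step nilpotent quadratic Lie algebra with $A_{n,2}\subseteq Z(A_n)$, $[b_i,b_j]_n=\sum_{k=1}^n D_{ijk}\,b_k^*$, $[b_i^*,\cdot\,]_n=0$, and $f_n(b_i,b_j^* )=\delta_{ij}$, $f_n(b_i,b_j)=f_n(b_i^*,b_j^* )=0$; (b) $(A_n,f_n)$ is reduced if and only if $A_{n,2}=\mathrm{span}\langle \sum_{k=1}^n \hat w_k(b_i,b_j): 1\leq j<i\leq n\rangle$, where $\hat w_k(b_i,b_j):=D_{ijk}\,b_k^*$.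
   Context: Work over a field $\mathbb{K}$ of characteristic zero. A quadratic Lie algebra $(A,f)$ is a Lie algebra with a non-degenerate symmetric bilinear form $f$ with $f([x,y],z)+f(y,[x,z])=0$. For an $f$-skew-symmetric derivation $d$ of $A$ (i.e. $f(d(x),y)+f(x,d(y))=0$), the one-dimensional double extension of $(A,f)$ by $(b,d)$ is $\mathbb{K}b\oplus A\oplus\mathbb{K}b^*$ with bracket $[\lambda b+a+\mu b^*,\lambda' b+a'+\mu' b^*]=\lambda d(a')-\lambda' d(a)+[a,a']_A+f(d(a),a')b^*$ and form $(\lambda b+a+\mu b^*,\lambda' b+a'+\mu' b^* )\mapsto\lambda\mu'+\lambda'\mu+f(a,a')$. A chain of one-dimensional double extensions $\{(A_k,f_k)\}_{k=0}^n$ by $\{(b_{k+1},d_k)\}_{k=0}^{n-1}$ is defined by $A_0=\{0\}$, $f_0=0$, and for $0\le k\le n-1$, $d_k$ an $f_k$-skew-symmetric derivation of $A_k$ and $(A_{k+1},f_{k+1})$ the one-dimensional double extension of $(A_k,f_k)$ by $(b_{k+1},d_k)$, $A_{k+1}=\mathbb{K}b_{k+1}\oplus A_k\oplus\mathbb{K}b_{k+1}^*$. Thus $A_k$ has basis $b_k,\dots,b_1,b_1^*,\dots,b_k^*$; set $A_{k,1}=\mathrm{span}\langle b_1,\dots,b_k\rangle$, $A_{k,2}=\mathrm{span}\langle b_1^*,\dots,b_k^*\rangle$. The chain satisfies (NNP) if $d_k\neq0$ for some $k$, and (2SP) if $\mathrm{im}\,d_k\subseteq A_{k,2}\subseteq\ker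 d_k$ for every $k\ge1$. For indices $i,j,k\in\{1,\dots,n\}$, $D_{ijk}:=\mathrm{sgn}(\sigma)f_{\sigma(k)-1}(d_{\sigma(k)-1}(b_{\sigma(i)}),b_{\sigma(j)})$ where $\sigma$ is the permutation of $\{i,j,k\}$ with $\sigma(i)<\sigma(j)<\sigma(k)$, and $D_{ijk}=0$ if two indices coincide. A quadratic Lie algebra $L$ is reduced if $Z(L)\subseteq [L,L]$; $2$-step nilpotent means $[L,[L,L]]=0\ne[L,L]$. *)

theory Defs
  imports Main "HOL-Library.Function_Algebras"
begin

text \<open>Coordinates: an element of A_k is a function on basis indices.
  B i stands for b_i, S i stands for b_i^* (i >= 1).\<close>
datatype bidx = B nat | S nat

type_synonym 'a elt = "bidx \<Rightarrow> 'a"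

definition scal :: "'a::field \<Rightarrow> 'a elt \<Rightarrow> 'a elt" where
  "scal c x = (\<lambda>i. c * x i)"

definition bvec :: "bidx \<Rightarrow> 'a::field elt" where
  "bvec j = (\<lambda>i. if i = j then 1 else 0)"

definition inA :: "nat \<Rightarrow> 'a::field elt \<Rightarrow> bool" where
  "inA k x \<longleftrightarrow> (\<forall>m. (m = 0 \<or> k < m) \<longrightarrow> x (B m) = 0 \<and> x (S m) = 0)"

definition inA2 :: "nat \<Rightarrow> 'a::field elt \<Rightarrow> bool" where
  "inA2 k x \<longleftrightarrow> inA k x \<and> (\<forall>m. x (B m) = 0)"

definition restr :: "nat \<Rightarrow> 'a::field elt \<Rightarrow> 'a elt" where
  "restr k x = (\<lambda>i. case i of B m \<Rightarrow> if 1 \<le> m \<and> m \<le> k then x i else 0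
                           | S m \<Rightarrow> if 1 \<le> m \<and> m \<le> k then x i else 0)"

fun fk :: "nat \<Rightarrow> 'a::field elt \<Rightarrow> 'a elt \<Rightarrow> 'a" where
  "fk 0 x y = 0"
| "fk (Suc k) x y = x (B (Suc k)) * y (S (Suc k)) + y (B (Suc k)) * x (S (Suc k))
      + fk k (restr k x) (restr k y)"

text \<open>The bracket of A_k, determined by the derivations d_0, ..., d_{k-1}
  (A_0 = 0; A_{k+1} is the double extension of A_k by (b_{k+1}, d_k)).\<close>
fun brk :: "(nat \<Rightarrow> 'a::field elt \<Rightarrow> 'a elt) \<Rightarrow> nat \<Rightarrow> 'a elt \<Rightarrow> 'a elt \<Rightarrow> 'a elt" where
  "brk d 0 x y = 0"
| "brk d (Suc k) x y =
     scal (x (B (Suc k))) (d k (restr k y)) - scal (y (B (Suc k))) (d k (restr k x))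
     + brk d k (restr k x) (restr k y)
     + scal (fk k (d k (restr k x)) (restr k y)) (bvec (S (Suc k)))"

definition lspan :: "'a::field elt set \<Rightarrow> 'a elt set" where
  "lspan W = {v. \<exists>F c. finite F \<and> F \<subseteq> W \<and> v = (\<Sum>u\<in>F. scal (c u) u)}"

definition lin_indep :: "'a::field elt set \<Rightarrow> bool" where
  "lin_indep W \<longleftrightarrow> (\<forall>F c. finite F \<and> F \<subseteq> W \<and> (\<Sum>u\<in>F. scal (c u) u) = 0 \<longrightarrow> (\<forall>u\<in>F. c u = 0))"

definition lie_algebra_on :: "'a::field elt set \<Rightarrow> ('a elt \<Rightarrow> 'a elt \<Rightarrow> 'a elt) \<Rightarrow> bool" where
  "lie_algebra_on V br \<longleftrightarrow>
     0 \<in> V \<and> (\<forall>x\<in>V. \<forall>y\<in>V. x + y \<in> V) \<and> (\<forall>c. \<forall>x\<in>V. scal c x \<in> V)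
   \<and> (\<forall>x\<in>V. \<forall>y\<in>V. br x y \<in> V)
   \<and> (\<forall>x\<in>V. \<forall>y\<in>V. \<forall>z\<in>V. br (x + y) z = br x z + br y z)
   \<and> (\<forall>c. \<forall>x\<in>V. \<forall>y\<in>V. br (scal c x) y = scal c (br x y))
   \<and> (\<forall>x\<in>V. br x x = 0)
   \<and> (\<forall>x\<in>V. \<forall>y\<in>V. \<forall>z\<in>V. br x (br y z) + br y (br z x) + br z (br x y) = 0)"

definition quadratic_lie_algebra_on ::
  "'a::field elt set \<Rightarrow> ('a elt \<Rightarrow> 'a elt \<Rightarrow> 'a elt) \<Rightarrow> ('a elt \<Rightarrow> 'a elt \<Rightarrow> 'a) \<Rightarrow> bool" where
  "quadratic_lie_algebra_on V br f \<longleftrightarrow>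
     lie_algebra_on V br
   \<and> (\<forall>x\<in>V. \<forall>y\<in>V. \<forall>z\<in>V. f (x + y) z = f x z + f y z)
   \<and> (\<forall>c. \<forall>x\<in>V. \<forall>y\<in>V. f (scal c x) y = c * f x y)
   \<and> (\<forall>x\<in>V. \<forall>y\<in>V. f x y = f y x)
   \<and> (\<forall>x\<in>V. (\<forall>y\<in>V. f x y = 0) \<longrightarrow> x = 0)
   \<and> (\<forall>x\<in>V. \<forall>y\<in>V. \<forall>z\<in>V. f (br x y) z + f y (br x z) = 0)"

text \<open>D_{ijk}: sign of the sorting permutation times f_{r-1}(d_{r-1}(b_p), b_q),
  where p<q<r is the increasing rearrangement of i,j,k.\<close>
definition Dc :: "(nat \<Rightarrow> 'a::field elt \<Rightarrow> 'a elt) \<Rightarrow> nat \<Rightarrow> nat \<Rightarrow> nat \<Rightarrow> 'a" where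
  "Dc d i j k =
    (if i = j \<or> j = k \<or> i = k then 0
     else (let p = min i (min j k); r = max i (max j k); q = i + j + k - p - r;
               inv = (if j < i then 1 else 0) + (if k < i then 1 else 0) + (if k < j then 1 else 0) :: nat
           in (-1) ^ inv * fk (r - 1) (d (r - 1) (bvec (B p))) (bvec (B q))))"

end

(* Under (2SP) every d_k maps A_k into A_{k,2} and kills A_{k,2}, so unrolling the recursive
   definition of the bracket gives [x,y] = sum_{p,q,r} x_p y_q D_{pqr} b_r^*, where x_p is the
   b_p-coordinate of x. Skew-symmetry of the d_k makes D totally antisymmetric, and everything is
   read off this formula: brackets lie in A_{n,2}, which is central, so A_n is 2-step nilpotent;
   f_n([x,y],z) = sum x_p y_q z_r D_{pqr} gives invariance; and (NNP) produces a nonzero D_{pqr},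
   whose three indices must be distinct, so n >= 3.
   For (b): the centre contains A_{n,2}, and the derived algebra is spanned by the [b_i,b_j] with
   j < i. By invariance a central element is f_n-orthogonal to every bracket, hence to A_{n,2} when
   the [b_i,b_j] span it, and so has no b-coordinates. *)

theory Submission
  imports Defs HOL.Modules
begin

lemma sum_apply: "(\<Sum>u\<in>F. g u) x = (\<Sum>u\<in>F. g u x)"
  by (induction F rule: infinite_finite_induct) auto

lemma scal_apply [simp]: "scal c x i = c * x i"
  by (simp add: scal_def)

interpretation elt: module "scal :: 'a::field \<Rightarrow> 'a elt \<Rightarrow> 'a elt"
  by unfold_locales (simp_all add: scal_def fun_eq_iff algebra_simps)

lemma bvec_apply [simp]: "bvec j i = (if i = j then 1 else 0)"
  by (simp add: bvec_def)

lemma restr_apply [simp]: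
  "restr k x (B m) = (if 1 \<le> m \<and> m \<le> k then x (B m) else 0)"
  "restr k x (S m) = (if 1 \<le> m \<and> m \<le> k then x (S m) else 0)"
  by (simp_all add: restr_def)

lemma elt_eqI: "(\<And>m. x (B m) = y (B m)) \<Longrightarrow> (\<And>m. x (S m) = y (S m)) \<Longrightarrow> x = y"
  by (rule ext) (metis bidx.exhaust)

lemma sum_delta_mult:
  "finite A \<Longrightarrow> (\<Sum>p\<in>A. (if p = i then 1 else 0) * f p) = (if i \<in> A then f i else (0::'a::semiring_1))"
  by (simp add: if_distrib[of "\<lambda>c. c * _"] cong: if_cong)

lemma sum_scal_bvec_apply [simp]:
  assumes "finite A"
  shows "(\<Sum>q\<in>A. scal (c q) (bvec (B q))) (B m) = (if m \<in> A then c m else 0)"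
    and "(\<Sum>q\<in>A. scal (c q) (bvec (B q))) (S m) = 0"
    and "(\<Sum>q\<in>A. scal (c q) (bvec (S q))) (S m) = (if m \<in> A then c m else 0)"
    and "(\<Sum>q\<in>A. scal (c q) (bvec (S q))) (B m) = 0"
  using assms by (simp_all add: sum_apply if_distrib[of "times (c _)"] cong: if_cong)

lemma sum_square_Suc:
  "(\<Sum>p=1..Suc k. \<Sum>q=1..Suc k. f p q) = (\<Sum>p=1..k. \<Sum>q=1..k. f p q)
     + (\<Sum>q=1..k. f (Suc k) q) + (\<Sum>p=1..k. f p (Suc k)) + (f (Suc k) (Suc k) :: 'a::comm_monoid_add)"
  by (simp add: sum.distrib add.assoc)

lemma sum_sum_antisym:
  fixes c :: "'i \<Rightarrow> 'i \<Rightarrow> 'a::comm_ring"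
  assumes "\<And>p q. c q p = - c p q"
  shows "(\<Sum>p\<in>A. \<Sum>q\<in>A. a p * b q * c p q) = - (\<Sum>p\<in>A. \<Sum>q\<in>A. b p * a q * c p q)"
proof -
  have "(\<Sum>p\<in>A. \<Sum>q\<in>A. a p * b q * c p q) = (\<Sum>q\<in>A. \<Sum>p\<in>A. a p * b q * c p q)"
    by (rule sum.swap)
  also have "\<dots> = - (\<Sum>q\<in>A. \<Sum>p\<in>A. b q * a p * c q p)"
  proof -
    have "a p * b q * c p q = - (b q * a p * c q p)" for p q
      by (subst assms) (simp add: mult_ac)
    then show ?thesis by (simp add: sum_negf)
  qed
  finally show ?thesis .
qed

lemma inA_zero [simp]: "inA k 0"
  and inA_add: "inA k x \<Longrightarrow> inA k y \<Longrightarrow> inA k (x + y)"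
  and inA_diff: "inA k x \<Longrightarrow> inA k y \<Longrightarrow> inA k (x - y)"
  and inA_scal: "inA k x \<Longrightarrow> inA k (scal c x)"
  and inA_restr [simp]: "inA k (restr k x)"
  by (simp_all add: inA_def)

lemma subspace_inA: "elt.subspace {x. inA k x}"
  by (simp add: elt.subspace_def inA_add inA_scal)

lemma subspace_inA2: "elt.subspace {x. inA2 k x}"
  by (simp add: elt.subspace_def inA2_def inA_add inA_scal)

lemma inA_sum: "(\<And>i. i \<in> I \<Longrightarrow> inA k (g i)) \<Longrightarrow> inA k (\<Sum>i\<in>I. g i)"
  using elt.subspace_sum[OF subspace_inA, of I g] by simp

lemma inA_bvec [simp]:
  "inA k (bvec (B m)) \<longleftrightarrow> 1 \<le> m \<and> m \<le> k"
  "inA k (bvec (S m)) \<longleftrightarrow> 1 \<le> m \<and> m \<le> k"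
  by (auto simp: inA_def)

lemma inA_outside:
  "inA k x \<Longrightarrow> \<not> (1 \<le> m \<and> m \<le> k) \<Longrightarrow> x (B m) = 0 \<and> x (S m) = 0"
  unfolding inA_def by (cases m) auto

lemma inA_0_eq_zero:
  assumes "inA 0 x"
  shows "x = 0"
proof
  fix t show "x t = 0 t"
    using inA_outside[OF assms] by (cases t) auto
qed

lemma inA2_imp_inA: "inA2 k x \<Longrightarrow> inA k x"
  by (simp add: inA2_def)

lemma Dc_swap12: "Dc d j i k = - Dc d i j k"
  by (auto simp: Dc_def Let_def min_def max_def)

lemma Dc_cycle: "Dc d j k i = Dc d i j k"
  by (auto simp: Dc_def Let_def min_def max_def)

lemma Dc_swap23: "Dc d i k j = - Dc d i j k"
  by (metis Dc_cycle Dc_swap12)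

lemma Dc_repeated [simp]: "Dc d i i k = 0" "Dc d i k i = 0" "Dc d k i i = 0"
  by (simp_all add: Dc_def)

lemma Dc_sorted:
  "p < q \<Longrightarrow> q < r \<Longrightarrow> Dc d p q r = fk (r - 1) (d (r - 1) (bvec (B p))) (bvec (B q))"
  by (simp add: Dc_def Let_def min_def max_def)

lemma fk_eq_sum: "fk k x y = (\<Sum>m=1..k. x (B m) * y (S m) + y (B m) * x (S m))"
proof (induction k arbitrary: x y)
  case (Suc k)
  have "(\<Sum>m=1..k. restr k x (B m) * restr k y (S m) + restr k y (B m) * restr k x (S m))
      = (\<Sum>m=1..k. x (B m) * y (S m) + y (B m) * x (S m))"
    by (rule sum.cong) auto
  then show ?case using Suc by (simp add: add.commute)
qed simp

lemma fk_zero [simp]: "fk k 0 y = 0" "fk k y 0 = 0"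
  by (simp_all add: fk_eq_sum)

lemma fk_sym: "fk k x y = fk k y x"
  by (simp add: fk_eq_sum algebra_simps)

lemma fk_add_left: "fk k (x + y) z = fk k x z + fk k y z"
  by (simp add: fk_eq_sum sum.distrib algebra_simps)

lemma fk_scal_left: "fk k (scal c x) y = c * fk k x y"
  by (simp add: fk_eq_sum sum_distrib_left algebra_simps)

lemma fk_bvec:
  assumes "1 \<le> l" "l \<le> k"
  shows fk_bvec_B: "fk k w (bvec (B l)) = w (S l)"
    and fk_bvec_S: "fk k w (bvec (S l)) = w (B l)"
proof -
  have "fk k w (bvec (B l)) = (\<Sum>m=1..k. if m = l then w (S m) else 0)"
    "fk k w (bvec (S l)) = (\<Sum>m=1..k. if m = l then w (B m) else 0)"
    unfolding fk_eq_sum by (rule sum.cong; simp)+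
  then show "fk k w (bvec (B l)) = w (S l)" "fk k w (bvec (S l)) = w (B l)"
    using assms by simp_all
qed

lemma fk_bvec_S_left: "1 \<le> l \<Longrightarrow> l \<le> k \<Longrightarrow> fk k (bvec (S l)) z = z (B l)"
  by (simp add: fk_sym[of k _ z] fk_bvec_S)

lemma fk_eq_sum_A2: "(\<And>m. w (B m) = 0) \<Longrightarrow> fk k w y = (\<Sum>m=1..k. y (B m) * w (S m))"
  by (simp add: fk_eq_sum)

definition std_basis :: "nat \<Rightarrow> 'a::field elt set" where
  "std_basis k = (\<lambda>i. bvec (B i)) ` {1..k} \<union> (\<lambda>i. bvec (S i)) ` {1..k}"

lemma lspan_eq_span: "lspan W = elt.span W"
  by (auto simp: lspan_def elt.span_explicit)

lemma elt_decomp: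
  assumes "inA k x"
  shows "x = (\<Sum>i=1..k. scal (x (B i)) (bvec (B i))) + (\<Sum>i=1..k. scal (x (S i)) (bvec (S i)))"
proof (rule elt_eqI)
  fix m
  show "x (B m) = ((\<Sum>i=1..k. scal (x (B i)) (bvec (B i))) + (\<Sum>i=1..k. scal (x (S i)) (bvec (S i)))) (B m)"
    and "x (S m) = ((\<Sum>i=1..k. scal (x (B i)) (bvec (B i))) + (\<Sum>i=1..k. scal (x (S i)) (bvec (S i)))) (S m)"
    using inA_outside[OF assms, of m] by auto
qed

lemma span_std_basis: "lspan (std_basis k) = {x :: 'a::field elt. inA k x}"
proof -
  have "x \<in> elt.span (std_basis k)" if "inA k x" for x :: "'a elt"
  proof -
    have "x = (\<Sum>i=1..k. scal (x (B i)) (bvec (B i))) + (\<Sum>i=1..k. scal (x (S i)) (bvec (S i)))"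
      using that by (rule elt_decomp)
    also have "\<dots> \<in> elt.span (std_basis k)"
      by (intro elt.span_add elt.span_sum elt.span_scale elt.span_base) (auto simp: std_basis_def)
    finally show ?thesis .
  qed
  moreover have "elt.span (std_basis k) \<subseteq> {x :: 'a elt. inA k x}"
    by (rule elt.span_minimal[OF _ subspace_inA]) (auto simp: std_basis_def)
  ultimately show ?thesis
    unfolding lspan_eq_span by blast
qed

lemma lin_indep_bvecs:
  assumes "W \<subseteq> range bvec"
  shows "lin_indep (W :: 'a::field elt set)"
  unfolding lin_indep_def
proof (intro allI impI ballI)
  fix F c u
  assume "finite F \<and> F \<subseteq> W \<and> (\<Sum>v\<in>F. scal (c v) v) = 0" and u: "u \<in> F"
  then have fin: "finite F" and sub: "F \<subseteq> W" and zero: "(\<Sum>v\<in>F. scal (c v) v) = 0"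
    by auto
  obtain t where t: "u = bvec t" using u sub assms by blast
  have others: "v t = 0" if "v \<in> F - {u}" for v
    using that sub assms t by (auto simp: fun_eq_iff)
  have "0 = (\<Sum>v\<in>F. scal (c v) v) t"
    using zero by simp
  also have "\<dots> = c u"
  proof -
    have "(\<Sum>v\<in>F - {u}. c v * v t) = 0"
      using others by (intro sum.neutral) simp
    then show ?thesis
      using fin u t by (simp add: sum_apply sum.remove)
  qed
  finally show "c u = 0" by simp
qed

lemma card_std_basis: "card (std_basis k :: 'a::field elt set) = 2 * k"
proof -
  have inj: "inj (\<lambda>i. bvec i :: 'a elt)"
    by (rule injI) (metis bvec_apply one_neq_zero)
  have "card (std_basis k :: 'a elt set) = card ((\<lambda>i. bvec (B i) :: 'a elt) ` {1..k}) + card ((\<lambda>i. bvec (S i) :: 'a elt) ` {1..k})"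
    unfolding std_basis_def by (rule card_Un_disjoint) (auto dest: injD[OF inj])
  moreover have "inj_on (\<lambda>i. bvec (B i) :: 'a elt) A" "inj_on (\<lambda>i. bvec (S i) :: 'a elt) A" for A
    using inj by (auto simp: inj_on_def dest: injD)
  ultimately show ?thesis
    by (simp add: card_image)
qed

locale two_step_chain =
  fixes d :: "nat \<Rightarrow> 'a::field_char_0 elt \<Rightarrow> 'a elt" and n :: nat
  assumes d_add: "\<And>k x y. k < n \<Longrightarrow> inA k x \<Longrightarrow> inA k y \<Longrightarrow> d k (x + y) = d k x + d k y"
    and d_scal: "\<And>k c x. k < n \<Longrightarrow> inA k x \<Longrightarrow> d k (scal c x) = scal c (d k x)"
    and d_skew: "\<And>k x y. k < n \<Longrightarrow> inA k x \<Longrightarrow> inA k y \<Longrightarrow> fk k (d k x) y + fk k x (d k y) = 0"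
    and d_image: "\<And>k x. 1 \<le> k \<Longrightarrow> k < n \<Longrightarrow> inA k x \<Longrightarrow> inA2 k (d k x)"
    and d_kernel: "\<And>k x. 1 \<le> k \<Longrightarrow> k < n \<Longrightarrow> inA2 k x \<Longrightarrow> d k x = 0"
begin

lemma d_zero: "k < n \<Longrightarrow> d k 0 = 0"
  using d_scal[of k 0 0] by simp

lemma d_in_A2:
  assumes "k < n" "inA k x"
  shows "inA2 k (d k x)"
proof (cases k)
  case 0
  then show ?thesis using assms inA_0_eq_zero[of x] by (simp add: d_zero inA2_def)
qed (use assms d_image in simp)

lemma d_vanishes_on_A2:
  assumes "k < n" "inA2 k x"
  shows "d k x = 0"
proof (cases k)
  case 0
  then show ?thesis using assms inA_0_eq_zero[of x] by (simp add: d_zero inA2_def)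
qed (use assms d_kernel in simp)

lemma fk_d_antisym:
  assumes "k < n" "inA k x" "inA k y"
  shows "fk k (d k y) x = - fk k (d k x) y"
  using d_skew[OF assms] fk_sym[of k x "d k y"] by (simp add: eq_neg_iff_add_eq_0 add.commute)

lemma d_sum:
  assumes "k < n" "\<And>i. i \<in> I \<Longrightarrow> inA k (g i)"
  shows "d k (\<Sum>i\<in>I. scal (c i) (g i)) = (\<Sum>i\<in>I. scal (c i) (d k (g i)))"
  using assms(2)
proof (induction I rule: infinite_finite_induct)
  case (insert i I)
  have gi: "inA k (g i)" and gI: "inA k (\<Sum>j\<in>I. scal (c j) (g j))"
    using insert.prems by (auto intro: inA_sum inA_scal)
  have "d k (\<Sum>j\<in>insert i I. scal (c j) (g j)) = d k (scal (c i) (g i) + (\<Sum>j\<in>I. scal (c j) (g j)))"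
    by (simp only: sum.insert[OF insert.hyps])
  also have "\<dots> = scal (c i) (d k (g i)) + d k (\<Sum>j\<in>I. scal (c j) (g j))"
    by (simp only: d_add[OF assms(1) inA_scal[OF gi] gI] d_scal[OF assms(1) gi])
  also have "d k (\<Sum>j\<in>I. scal (c j) (g j)) = (\<Sum>j\<in>I. scal (c j) (d k (g j)))"
    using insert.IH insert.prems by blast
  finally show ?case
    by (simp only: sum.insert[OF insert.hyps])
qed (simp_all add: d_zero[OF assms(1)])

lemma Dc_top:
  assumes "k < n" "p \<in> {1..k}" "q \<in> {1..k}"
  shows "Dc d p q (Suc k) = fk k (d k (bvec (B p))) (bvec (B q))"
proof -
  have b: "inA k (bvec (B p))" "inA k (bvec (B q))"
    using assms by auto
  consider "p < q" | "p = q" | "q < p" by linarith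
  then show ?thesis
  proof cases
    case 1 then show ?thesis using assms by (simp add: Dc_sorted)
  next
    case 2 then show ?thesis using fk_d_antisym[OF assms(1) b(1) b(1)] by simp
  next
    case 3 then show ?thesis
      using assms fk_d_antisym[OF assms(1) b(1) b(2)] by (simp add: Dc_swap12[of d p q] Dc_sorted)
  qed
qed

lemma d_eq_sum:
  assumes "k < n" "inA k x"
  shows "d k x = (\<Sum>q=1..k. scal (x (B q)) (d k (bvec (B q))))"
proof -
  define v where "v = (\<Sum>q=1..k. scal (x (B q)) (bvec (B q)))"
  have v: "inA k v"
    unfolding v_def by (intro inA_sum inA_scal) auto
  have "inA2 k (x - v)"
    using inA_outside[OF assms(2)] inA_diff[OF assms(2) v] by (auto simp: inA2_def v_def)
  then have "d k x = d k v + d k (x - v)"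
    using d_add[OF assms(1) v inA_diff[OF assms(2) v]] by simp
  also have "\<dots> = d k v"
    using d_vanishes_on_A2[OF assms(1) \<open>inA2 k (x - v)\<close>] by simp
  also have "\<dots> = (\<Sum>q=1..k. scal (x (B q)) (d k (bvec (B q))))"
    unfolding v_def by (rule d_sum[OF assms(1)]) auto
  finally show ?thesis .
qed

lemma d_apply_S:
  assumes "k < n" "inA k x" "1 \<le> r" "r \<le> k"
  shows "d k x (S r) = (\<Sum>q=1..k. x (B q) * Dc d q r (Suc k))"
proof -
  have "d k (bvec (B q)) (S r) = Dc d q r (Suc k)" if "q \<in> {1..k}" for q
    using assms that by (simp add: Dc_top fk_bvec_B)
  then show ?thesis
    by (subst d_eq_sum[OF assms(1,2)]) (simp add: sum_apply)
qed

lemma brk_apply_B: "k \<le> n \<Longrightarrow> brk d k x y (B m) = 0"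
proof (induction k arbitrary: x y)
  case (Suc k)
  then show ?case
    using d_in_A2[of k "restr k x"] d_in_A2[of k "restr k y"] by (simp add: inA2_def)
qed simp

lemma d_restr_apply_S:
  assumes "k < n"
  shows "d k (restr k x) (S r) =
    (if 1 \<le> r \<and> r \<le> k then \<Sum>p=1..k. x (B p) * Dc d p r (Suc k) else 0)"
proof (cases "1 \<le> r \<and> r \<le> k")
  case True
  then show ?thesis
    using d_apply_S[OF assms inA_restr, of r x] by (simp cong: sum.cong_simp)
next
  case False
  then show ?thesis
    using inA_outside[OF inA2_imp_inA[OF d_in_A2[OF assms inA_restr]]] by auto
qed

lemma brk_apply_S:
  "k \<le> n \<Longrightarrow> brk d k x y (S r) =
     (if 1 \<le> r \<and> r \<le> k then \<Sum>p=1..k. \<Sum>q=1..k. x (B p) * y (B q) * Dc d p q r else 0)"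
proof (induction k arbitrary: x y r)
  case (Suc k)
  let ?K = "Suc k"
  have k: "k < n" using Suc.prems by simp
  have IH: "brk d k (restr k x) (restr k y) (S r) =
     (if 1 \<le> r \<and> r \<le> k then \<Sum>p=1..k. \<Sum>q=1..k. x (B p) * y (B q) * Dc d p q r else 0)" for r
    using Suc by (simp cong: sum.cong_simp)
  have top: "fk k (d k (restr k x)) (restr k y) = (\<Sum>p=1..k. \<Sum>q=1..k. x (B p) * y (B q) * Dc d p q ?K)"
  proof -
    have "fk k (d k (restr k x)) (restr k y) = (\<Sum>q=1..k. y (B q) * (\<Sum>p=1..k. x (B p) * Dc d p q ?K))"
      using d_in_A2[OF k inA_restr, of x] by (simp add: fk_eq_sum_A2 inA2_def d_restr_apply_S[OF k] cong: sum.cong_simp)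
    also have "\<dots> = (\<Sum>p=1..k. \<Sum>q=1..k. x (B p) * y (B q) * Dc d p q ?K)"
      by (subst sum.swap) (simp add: sum_distrib_left mult_ac)
    finally show ?thesis .
  qed
  have step: "brk d ?K x y (S r) = x (B ?K) * d k (restr k y) (S r) - y (B ?K) * d k (restr k x) (S r)
     + brk d k (restr k x) (restr k y) (S r) + (if r = ?K then fk k (d k (restr k x)) (restr k y) else 0)"
    by simp
  consider "1 \<le> r \<and> r \<le> k" | "r = ?K" | "\<not> (1 \<le> r \<and> r \<le> ?K)" by linarith
  then show ?case
  proof cases
    case 1
    have "(\<Sum>q=1..k. x (B ?K) * y (B q) * Dc d ?K q r) = x (B ?K) * (\<Sum>q=1..k. y (B q) * Dc d q r ?K)"
      by (simp add: sum_distrib_left mult_ac Dc_cycle[of d _ _ ?K, symmetric])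
    moreover have "(\<Sum>p=1..k. x (B p) * y (B ?K) * Dc d p ?K r) = - (y (B ?K) * (\<Sum>p=1..k. x (B p) * Dc d p r ?K))"
      by (simp add: sum_distrib_left sum_negf mult_ac Dc_swap23[of d _ r ?K])
    ultimately show ?thesis
      using 1 unfolding sum_square_Suc by (simp add: step IH d_restr_apply_S[OF k] del: sum.cl_ivl_Suc)
  next
    case 2
    then show ?thesis
      unfolding sum_square_Suc by (simp add: step IH d_restr_apply_S[OF k] top del: sum.cl_ivl_Suc)
  next
    case 3
    then show ?thesis by (auto simp: step IH d_restr_apply_S[OF k])
  qed
qed simp

lemma brk_in_A2: "inA2 n (brk d n x y)"
  by (auto simp: inA2_def inA_def brk_apply_B brk_apply_S)

lemma brk_A2_left: "inA2 n z \<Longrightarrow> brk d n z x = 0"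
  by (rule elt_eqI) (simp_all add: inA2_def brk_apply_B brk_apply_S)

lemma brk_add_left: "brk d n (x + y) z = brk d n x z + brk d n y z"
  by (rule elt_eqI) (simp_all add: brk_apply_B brk_apply_S sum.distrib algebra_simps)

lemma brk_scal_left: "brk d n (scal c x) y = scal c (brk d n x y)"
  by (rule elt_eqI) (simp_all add: brk_apply_B brk_apply_S sum_distrib_left mult_ac)

lemma brk_antisym: "brk d n x y = - brk d n y x"
proof (rule elt_eqI)
  fix r
  show "brk d n x y (S r) = (- brk d n y x) (S r)"
    using sum_sum_antisym[where c = "\<lambda>p q. Dc d p q r" and A = "{1..n}" and a = "\<lambda>p. x (B p)" and b = "\<lambda>q. y (B q)", OF Dc_swap12]
    by (simp add: brk_apply_S)
qed (simp add: brk_apply_B)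

lemma brk_self: "brk d n x x = 0"
  using brk_antisym[of x x] by (simp add: fun_eq_iff)

lemma brk_A2_right: "inA2 n z \<Longrightarrow> brk d n x z = 0"
  using brk_A2_left[of z x] brk_antisym[of x z] by simp

lemma fk_brk:
  "fk n (brk d n x y) z = (\<Sum>p=1..n. \<Sum>q=1..n. \<Sum>r=1..n. x (B p) * y (B q) * z (B r) * Dc d p q r)"
proof -
  have "fk n (brk d n x y) z = (\<Sum>r=1..n. \<Sum>p=1..n. \<Sum>q=1..n. x (B p) * y (B q) * z (B r) * Dc d p q r)"
    by (simp add: fk_eq_sum_A2 brk_apply_B brk_apply_S sum_distrib_left mult_ac)
  also have "\<dots> = (\<Sum>p=1..n. \<Sum>r=1..n. \<Sum>q=1..n. x (B p) * y (B q) * z (B r) * Dc d p q r)"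
    by (rule sum.swap)
  also have "\<dots> = (\<Sum>p=1..n. \<Sum>q=1..n. \<Sum>r=1..n. x (B p) * y (B q) * z (B r) * Dc d p q r)"
    by (rule sum.cong[OF refl], rule sum.swap)
  finally show ?thesis .
qed

lemma brk_invariant: "fk n (brk d n x y) z + fk n y (brk d n x z) = 0"
proof -
  have "(\<Sum>q=1..n. \<Sum>r=1..n. x (B p) * y (B q) * z (B r) * Dc d p q r)
      = - (\<Sum>q=1..n. \<Sum>r=1..n. x (B p) * z (B q) * y (B r) * Dc d p q r)" for p
    using sum_sum_antisym[where c = "\<lambda>q r. Dc d p q r" and A = "{1..n}" and a = "\<lambda>q. x (B p) * y (B q)" and b = "\<lambda>r. z (B r)", OF Dc_swap23]
    by (simp add: mult_ac)
  then show ?thesis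
    by (simp add: fk_sym[of n y] fk_brk sum.distrib[symmetric] sum_negf)
qed

lemma brk_apply_bvec:
  assumes "i \<in> {1..n}" "j \<in> {1..n}"
  shows "brk d n (bvec (B i)) (bvec (B j)) (S r) = (if 1 \<le> r \<and> r \<le> n then Dc d i j r else 0)"
  using assms by (simp add: brk_apply_S mult.assoc sum_distrib_left[symmetric] sum_delta_mult)

lemma brk_bvec:
  "i \<in> {1..n} \<Longrightarrow> j \<in> {1..n} \<Longrightarrow>
    brk d n (bvec (B i)) (bvec (B j)) = (\<Sum>k=1..n. scal (Dc d i j k) (bvec (S k)))"
  by (rule elt_eqI) (simp_all add: brk_apply_B brk_apply_bvec)

lemma brk_expand:
  "brk d n x y = (\<Sum>p=1..n. \<Sum>q=1..n. scal (x (B p) * y (B q)) (brk d n (bvec (B p)) (bvec (B q))))"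
proof (rule elt_eqI)
  fix m
  have "(\<Sum>p=1..n. \<Sum>q=1..n. scal (x (B p) * y (B q)) (brk d n (bvec (B p)) (bvec (B q)))) (S m)
      = (\<Sum>p=1..n. \<Sum>q=1..n. x (B p) * y (B q) * (if 1 \<le> m \<and> m \<le> n then Dc d p q m else 0))"
    by (simp add: sum_apply brk_apply_bvec cong: sum.cong_simp)
  then show "brk d n x y (S m) =
      (\<Sum>p=1..n. \<Sum>q=1..n. scal (x (B p) * y (B q)) (brk d n (bvec (B p)) (bvec (B q)))) (S m)"
    by (auto simp: brk_apply_S)
qed (simp add: sum_apply brk_apply_B)

lemma fk_nondegenerate:
  assumes x: "inA n x" and orth: "\<And>y. inA n y \<Longrightarrow> fk n x y = 0"
  shows "x = 0"
proof (rule elt_eqI)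
  fix m
  show "x (B m) = 0 (B m)" "x (S m) = 0 (S m)"
    using inA_outside[OF x, of m] orth[of "bvec (S m)"] orth[of "bvec (B m)"]
    by (auto simp: fk_bvec_B fk_bvec_S)
qed

lemma quadratic_lie_algebra: "quadratic_lie_algebra_on {x. inA n x} (brk d n) (fk n)"
proof -
  have "lie_algebra_on {x. inA n x} (brk d n)"
    using brk_in_A2 brk_A2_right[OF brk_in_A2]
    by (auto simp: lie_algebra_on_def inA2_def inA_add inA_scal brk_add_left brk_scal_left brk_self)
  then show ?thesis
    unfolding quadratic_lie_algebra_on_def
    using fk_nondegenerate brk_invariant by (auto simp: fk_add_left fk_scal_left fk_sym[of n])
qed

lemma nonzero_structure_constant:
  assumes "\<exists>k<n. \<exists>x. inA k x \<and> d k x \<noteq> 0"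
  obtains p q r where "p \<in> {1..n}" "q \<in> {1..n}" "r \<in> {1..n}" "Dc d p q r \<noteq> 0"
proof -
  obtain k x where k: "k < n" and x: "inA k x" and t: "d k x \<noteq> 0"
    using assms by blast
  have A2: "inA2 k (d k x)"
    by (rule d_in_A2[OF k x])
  obtain t where dt: "d k x t \<noteq> 0"
    using t by (auto simp: fun_eq_iff)
  obtain r where tr: "t = S r"
    using dt A2 by (cases t) (auto simp: inA2_def)
  have r: "r \<in> {1..k}" "d k x (S r) \<noteq> 0"
    using dt tr inA_outside[OF inA2_imp_inA[OF A2], of r] by auto
  then have "(\<Sum>q=1..k. x (B q) * Dc d q r (Suc k)) \<noteq> 0"
    using d_apply_S[OF k x] by auto
  then obtain q where "q \<in> {1..k}" "Dc d q r (Suc k) \<noteq> 0"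
    by (metis (no_types, lifting) mult_zero_right sum.neutral)
  then show ?thesis
    using that[of q r "Suc k"] r k by auto
qed

lemma three_le_n:
  assumes "\<exists>k<n. \<exists>x. inA k x \<and> d k x \<noteq> 0"
  shows "3 \<le> n"
proof -
  obtain p q r where "p \<in> {1..n}" "q \<in> {1..n}" "r \<in> {1..n}" "Dc d p q r \<noteq> 0"
    using nonzero_structure_constant[OF assms] .
  moreover from \<open>Dc d p q r \<noteq> 0\<close> have "p \<noteq> q" "q \<noteq> r" "p \<noteq> r"
    by auto
  ultimately show ?thesis
    by auto
qed

lemma brk_nonzero:
  assumes "\<exists>k<n. \<exists>x. inA k x \<and> d k x \<noteq> 0"
  shows "\<exists>x y. inA n x \<and> inA n y \<and> brk d n x y \<noteq> 0"
proof -
  obtain p q r where pqr: "p \<in> {1..n}" "q \<in> {1..n}" "r \<in> {1..n}" "Dc d p q r \<noteq> 0"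
    using nonzero_structure_constant[OF assms] .
  then have "brk d n (bvec (B p)) (bvec (B q)) (S r) \<noteq> 0"
    by (simp add: brk_apply_bvec)
  then have "brk d n (bvec (B p)) (bvec (B q)) \<noteq> 0"
    by auto
  moreover have "inA n (bvec (B p))" "inA n (bvec (B q))"
    using pqr by auto
  ultimately show ?thesis
    by blast
qed

abbreviation basic_brackets :: "'a elt set" where
  "basic_brackets \<equiv> {brk d n (bvec (B i)) (bvec (B j)) | i j. 1 \<le> j \<and> j < i \<and> i \<le> n}"

lemma basic_brackets_eq:
  "{(\<Sum>k=1..n. scal (Dc d i j k) (bvec (S k))) | i j. 1 \<le> j \<and> j < i \<and> i \<le> n} = basic_brackets"
  by (force simp: brk_bvec)

lemma brk_bvec_in_span:
  assumes "i \<in> {1..n}" "j \<in> {1..n}"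
  shows "brk d n (bvec (B i)) (bvec (B j)) \<in>
    elt.span basic_brackets"
proof -
  consider "j < i" | "i = j" | "i < j" by linarith
  then show ?thesis
  proof cases
    case 1 then show ?thesis using assms by (intro elt.span_base) auto
  next
    case 2 then show ?thesis by (simp add: brk_self elt.span_zero)
  next
    case 3
    then have "brk d n (bvec (B j)) (bvec (B i)) \<in> elt.span basic_brackets"
      using assms by (intro elt.span_base) auto
    then show ?thesis by (subst brk_antisym) (rule elt.span_neg)
  qed
qed

lemma brk_in_span_basic_brackets:
  "brk d n x y \<in> elt.span basic_brackets"
  by (subst brk_expand) (intro elt.span_sum elt.span_scale brk_bvec_in_span; simp)

lemma center_orthogonal_to_brackets:
  assumes "\<And>x. inA n x \<Longrightarrow> brk d n z x = 0"
    and "w \<in> elt.span basic_brackets"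
  shows "fk n w z = 0"
proof -
  have "elt.span basic_brackets \<subseteq> {w. fk n w z = 0}"
  proof (rule elt.span_minimal)
    show "elt.subspace {w. fk n w z = 0}"
      by (simp add: elt.subspace_def fk_add_left fk_scal_left)
    have "fk n (brk d n x y) z = 0" if "inA n x" for x y
      using brk_invariant[of x y z] assms(1)[OF that] brk_antisym[of x z] by simp
    then show "basic_brackets \<subseteq> {w. fk n w z = 0}"
      by auto
  qed
  then show ?thesis using assms(2) by blast
qed

lemma reduced_iff:
  "{z. inA n z \<and> (\<forall>x. inA n x \<longrightarrow> brk d n z x = 0)} \<subseteq> lspan {brk d n x y | x y. inA n x \<and> inA n y}
    \<longleftrightarrow> {x. inA2 n x} = lspan basic_brackets"
  (is "?Z \<subseteq> lspan ?Br \<longleftrightarrow> ?A2 = _")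
proof -
  have A2_center: "?A2 \<subseteq> ?Z"
    by (auto simp: brk_A2_left inA2_imp_inA)
  have span_basic_brackets_A2: "elt.span basic_brackets \<subseteq> ?A2"
    by (rule elt.span_minimal[OF _ subspace_inA2]) (auto simp: brk_in_A2)
  have span_brackets: "elt.span ?Br \<subseteq> elt.span basic_brackets"
    by (rule elt.span_minimal) (blast intro: brk_in_span_basic_brackets, simp)
  have basic_brackets_Br: "basic_brackets \<subseteq> ?Br"
    by fastforce
  show ?thesis
    unfolding lspan_eq_span
  proof
    assume "?Z \<subseteq> elt.span ?Br"
    then show "?A2 = elt.span basic_brackets"
      using A2_center span_basic_brackets_A2 span_brackets by blast
  next
    assume A2: "?A2 = elt.span basic_brackets"
    have "z \<in> ?A2" if "z \<in> ?Z" for z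
    proof -
      have "z (B l) = 0" for l
      proof (cases "1 \<le> l \<and> l \<le> n")
        case True
        then have "bvec (S l) \<in> elt.span basic_brackets"
          using A2 by (auto simp: inA2_def)
        then show ?thesis
          using center_orthogonal_to_brackets[of z "bvec (S l)"] that True
          by (simp add: fk_bvec_S_left)
      next
        case False
        then show ?thesis using that inA_outside by blast
      qed
      then show ?thesis using that by (simp add: inA2_def)
    qed
    then show "?Z \<subseteq> elt.span ?Br"
      using A2 elt.span_mono[OF basic_brackets_Br] by blast
  qed
qed

end

theorem lemma2p13:
  fixes d :: "nat \<Rightarrow> 'a::field_char_0 elt \<Rightarrow> 'a elt" and n :: nat
  assumes maps: "\<And>k x. k < n \<Longrightarrow> inA k x \<Longrightarrow> inA k (d k x)"
    and lin_add: "\<And>k x y. k < n \<Longrightarrow> inA k x \<Longrightarrow> inA k y \<Longrightarrow> d k (x + y) = d k x + d k y"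
    and lin_scal: "\<And>k c x. k < n \<Longrightarrow> inA k x \<Longrightarrow> d k (scal c x) = scal c (d k x)"
    and deriv: "\<And>k x y. k < n \<Longrightarrow> inA k x \<Longrightarrow> inA k y \<Longrightarrow>
                   d k (brk d k x y) = brk d k (d k x) y + brk d k x (d k y)"
    and skew: "\<And>k x y. k < n \<Longrightarrow> inA k x \<Longrightarrow> inA k y \<Longrightarrow>
                   fk k (d k x) y + fk k x (d k y) = 0"
    and NNP: "\<exists>k<n. \<exists>x. inA k x \<and> d k x \<noteq> 0"
    and SP2_im: "\<And>k x. 1 \<le> k \<Longrightarrow> k < n \<Longrightarrow> inA k x \<Longrightarrow> inA2 k (d k x)"
    and SP2_ker: "\<And>k x. 1 \<le> k \<Longrightarrow> k < n \<Longrightarrow> inA2 k x \<Longrightarrow> d k x = 0"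
  shows "3 \<le> n
    \<and> (quadratic_lie_algebra_on {x. inA n x} (brk d n) (fk n)
       \<and> lspan ((\<lambda>i. bvec (B i) :: 'a elt) ` {1..n} \<union> (\<lambda>i. bvec (S i)) ` {1..n}) = {x. inA n x}
       \<and> lin_indep ((\<lambda>i. bvec (B i) :: 'a elt) ` {1..n} \<union> (\<lambda>i. bvec (S i)) ` {1..n})
       \<and> card ((\<lambda>i. bvec (B i) :: 'a elt) ` {1..n} \<union> (\<lambda>i. bvec (S i)) ` {1..n}) = 2 * n
       \<and> (\<forall>x y z. inA n x \<and> inA n y \<and> inA n z \<longrightarrow> brk d n x (brk d n y z) = 0)
       \<and> (\<exists>x y. inA n x \<and> inA n y \<and> brk d n x y \<noteq> 0)
       \<and> (\<forall>z. inA2 n z \<longrightarrow> (\<forall>x. inA n x \<longrightarrow> brk d n z x = 0))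
       \<and> (\<forall>i\<in>{1..n}. \<forall>j\<in>{1..n}.
            brk d n (bvec (B i)) (bvec (B j)) = (\<Sum>k=1..n. scal (Dc d i j k) (bvec (S k))))
       \<and> (\<forall>i\<in>{1..n}. \<forall>x. inA n x \<longrightarrow> brk d n (bvec (S i)) x = 0)
       \<and> (\<forall>i\<in>{1..n}. \<forall>j\<in>{1..n}.
            fk n (bvec (B i)) (bvec (S j)) = (if i = j then 1 else 0)
          \<and> fk n (bvec (B i)) (bvec (B j)) = 0
          \<and> fk n (bvec (S i)) (bvec (S j)) = 0))
    \<and> ({z. inA n z \<and> (\<forall>x. inA n x \<longrightarrow> brk d n z x = 0)}
          \<subseteq> lspan {brk d n x y | x y. inA n x \<and> inA n y}
       \<longleftrightarrow> {x. inA2 n x} =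
           lspan {(\<Sum>k=1..n. scal (Dc d i j k) (bvec (S k))) | i j. 1 \<le> j \<and> j < i \<and> i \<le> n})"
proof -
  interpret two_step_chain d n
    by unfold_locales (fact lin_add lin_scal skew SP2_im SP2_ker)+
  have A2_bvec_S: "inA2 n (bvec (S i))" if "i \<in> {1..n}" for i
    using that by (simp add: inA2_def)
  have fk_values: "fk n (bvec (B i)) (bvec (S j)) = (if i = j then 1 else 0)
      \<and> fk n (bvec (B i)) (bvec (B j)) = 0 \<and> fk n (bvec (S i)) (bvec (S j)) = 0"
    if "i \<in> {1..n}" "j \<in> {1..n}" for i j
    using that by (simp add: fk_bvec_B fk_bvec_S)
  have "lin_indep (std_basis n :: 'a elt set)"
    by (rule lin_indep_bvecs) (auto simp: std_basis_def)
  then show ?thesis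
    using three_le_n[OF NNP] quadratic_lie_algebra
      span_std_basis[of n] card_std_basis[of n]
      brk_A2_right[OF brk_in_A2] brk_nonzero[OF NNP] brk_A2_left brk_bvec A2_bvec_S fk_values
      reduced_iff[folded basic_brackets_eq]
    unfolding std_basis_def by (intro conjI) blast+
qed

end
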